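(* Let $\pi$ be a permutation of $V=\{1,\dots,n\}$ and $s\in\mathbb{N}$. Let $T$ be a uniformly random transposition on $V$. Then the probability that some cycle of $\pi$ is split in $T\circ\pi$ into two cycles at least one of which has length at most $s$ is at most $2s/(n-1)$.
   Context: A transposition $T=(x,y)$ is uniformly chosen among all transpositions of $V$. If $x$ and $y$ lie in the same cycle of $\pi$, then that cycle is split in $T\circ\pi$ into two cycles; otherwise two cycles are joined. *)

theory Defs
  imports "HOL-Probability.Probability" "HOL-Combinatorics.Combinatorics"
begin

definition transpositions :: "'a set \<Rightarrow> ('a \<Rightarrow> 'a) set" where
  "transpositions V = {Transposition.transpose x y | x y. x \<in> V \<and> y \<in> V \<and> x \<noteq> y}"

definition small_split :: "('a \<Rightarrow> 'a) \<Rightarrow> nat \<Rightarrow> ('a \<Rightarrow> 'a) \<Rightarrow> bool" where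
  "small_split \<pi> s T \<longleftrightarrow>
     (\<exists>x y. x \<noteq> y \<and> T = Transposition.transpose x y \<and> y \<in> orbit \<pi> x
        \<and> y \<notin> orbit (T \<circ> \<pi>) x
        \<and> (card (orbit (T \<circ> \<pi>) x) \<le> s \<or> card (orbit (T \<circ> \<pi>) y) \<le> s))"

end

theory Submission
  imports Defs
begin

(* If y = \<pi>^k x with k minimal, then T = (x y) cuts the \<pi>-path x, \<pi> x, ..., \<pi>^k x = y at y:
   T \<circ> \<pi> agrees with \<pi> on \<pi>^0 x, ..., \<pi>^(k-2) x and sends \<pi>^(k-1) x back to x, so
   the cycle of x in T \<circ> \<pi> has length exactly k.  Hence a split producing a cycle of length
   at most s is a transposition (z \<pi>^k z) with z \<in> V and 1 \<le> k \<le> s; there are at most n s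
   of these among the n (n - 1) / 2 transpositions of V. *)

lemma funpow_transpose_comp_below_funpow_dist1:
  assumes "y \<in> orbit \<pi> x" "j < funpow_dist1 \<pi> x y"
  shows "((Transposition.transpose x y \<circ> \<pi>) ^^ j) x = (\<pi> ^^ j) x"
  using assms(2)
proof (induction j)
  case (Suc j)
  have "(\<pi> ^^ Suc j) x \<noteq> y"
    using Suc.prems by (intro funpow_dist1_least) auto
  moreover have "(\<pi> ^^ Suc j) x \<noteq> (\<pi> ^^ 0) x"
    using Suc.prems by (intro funpow_neq_less_funpow_dist1[OF assms(1)]) auto
  ultimately show ?case
    using Suc by simp
qed simp

lemma card_orbit_transpose_comp:
  assumes "y \<in> orbit \<pi> x"
  shows "card (orbit (Transposition.transpose x y \<circ> \<pi>) x) = funpow_dist1 \<pi> x y"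
proof -
  define \<sigma> where "\<sigma> = Transposition.transpose x y \<circ> \<pi>"
  define k where "k = funpow_dist1 \<pi> x y"
  have agree: "(\<sigma> ^^ j) x = (\<pi> ^^ j) x" if "j < k" for j
    using funpow_transpose_comp_below_funpow_dist1[OF assms] that unfolding \<sigma>_def k_def by blast
  have "(\<sigma> ^^ k) x = Transposition.transpose x y ((\<pi> ^^ k) x)"
    using agree[of "k - 1"] by (simp add: k_def \<sigma>_def)
  also have "\<dots> = x"
    using funpow_dist1_prop[OF assms] by (simp add: k_def)
  finally have "orbit \<sigma> x = {(\<sigma> ^^ j) x | j. j < k}"
    by (rule orbit_altdef_bounded) (simp add: k_def)
  also have "\<dots> = (\<lambda>j. (\<pi> ^^ j) x) ` {0..<k}"
    using agree by (auto intro!: exI[where x=j for j])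
  finally have "orbit \<sigma> x = (\<lambda>j. (\<pi> ^^ j) x) ` {0..<k}" .
  moreover have "inj_on (\<lambda>j. (\<pi> ^^ j) x) {0..<k}"
    unfolding k_def by (rule inj_on_funpow_dist1[OF assms])
  ultimately show ?thesis
    by (simp add: card_image \<sigma>_def k_def)
qed

lemma small_split_imp_transpose_funpow:
  assumes "permutation \<pi>" "small_split \<pi> s T"
  shows "\<exists>z k. \<pi> z \<noteq> z \<and> 0 < k \<and> k \<le> s \<and> T = Transposition.transpose z ((\<pi> ^^ k) z)"
proof -
  have short_cycle: "\<exists>k. \<pi> z \<noteq> z \<and> 0 < k \<and> k \<le> s \<and> T = Transposition.transpose z ((\<pi> ^^ k) z)"
    if "z \<noteq> w" "w \<in> orbit \<pi> z" "T = Transposition.transpose z w"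
      "card (orbit (T \<circ> \<pi>) z) \<le> s" for z w
  proof (intro exI conjI)
    show "\<pi> z \<noteq> z"
      using that(1,2) by (metis orbit_eq_singleton_iff singletonD)
    show "(0::nat) < funpow_dist1 \<pi> z w" by simp
    show "funpow_dist1 \<pi> z w \<le> s"
      using that(3,4) card_orbit_transpose_comp[OF that(2)] by simp
    show "T = Transposition.transpose z ((\<pi> ^^ funpow_dist1 \<pi> z w) z)"
      using that(3) funpow_dist1_prop[OF that(2)] by simp
  qed
  obtain x y where xy: "x \<noteq> y" "T = Transposition.transpose x y" "y \<in> orbit \<pi> x"
    and small: "card (orbit (T \<circ> \<pi>) x) \<le> s \<or> card (orbit (T \<circ> \<pi>) y) \<le> s"
    using assms(2) unfolding small_split_def by blast
  from small show ?thesis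
  proof
    assume "card (orbit (T \<circ> \<pi>) x) \<le> s"
    with short_cycle[OF xy(1,3,2)] show ?thesis by blast
  next
    assume small_y: "card (orbit (T \<circ> \<pi>) y) \<le> s"
    have x_in: "x \<in> orbit \<pi> y"
      using xy(3) by (rule orbit_swap[OF permutation_self_in_orbit[OF assms(1)]])
    have T_yx: "T = Transposition.transpose y x"
      using xy(2) by (simp add: transpose_commute)
    from short_cycle[OF not_sym[OF xy(1)] x_in T_yx small_y] show ?thesis by blast
  qed
qed

lemma small_splits_subset_image:
  assumes "\<pi> permutes V" "finite V"
  shows "{T. small_split \<pi> s T} \<subseteq> (\<lambda>(z, k). Transposition.transpose z ((\<pi> ^^ k) z)) ` (V \<times> {1..s})"
proof
  fix T assume "T \<in> {T. small_split \<pi> s T}"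
  with small_split_imp_transpose_funpow[OF permutes_imp_permutation[OF assms(2,1)]]
  obtain z k where "\<pi> z \<noteq> z" "0 < k" "k \<le> s" "T = Transposition.transpose z ((\<pi> ^^ k) z)"
    by fastforce
  moreover from \<open>\<pi> z \<noteq> z\<close> have "z \<in> V"
    using assms(1) permutes_not_in by fastforce
  ultimately show "T \<in> (\<lambda>(z, k). Transposition.transpose z ((\<pi> ^^ k) z)) ` (V \<times> {1..s})"
    by (intro image_eqI[where x="(z, k)"]) auto
qed

lemma card_transpositions:
  assumes "finite V"
  shows "card (transpositions V) = card V choose 2"
proof -
  have support: "{z. Transposition.transpose x y z \<noteq> z} = {x, y}" if "x \<noteq> y" for x y :: 'a
    using that by (auto simp: Transposition.transpose_def)
  have "inj_on (\<lambda>T. {z. T z \<noteq> z}) (transpositions V)"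
  proof (rule inj_onI)
    fix S T assume "S \<in> transpositions V" "T \<in> transpositions V"
      and same_support: "{z. S z \<noteq> z} = {z. T z \<noteq> z}"
    then obtain a b c d where "a \<noteq> b" "S = Transposition.transpose a b"
      "c \<noteq> d" "T = Transposition.transpose c d"
      unfolding transpositions_def by blast
    with same_support show "S = T"
      by (auto simp: support doubleton_eq_iff transpose_commute)
  qed
  moreover have "(\<lambda>T. {z. T z \<noteq> z}) ` transpositions V = {A. A \<subseteq> V \<and> card A = 2}"
  proof (intro equalityI subsetI)
    fix A assume "A \<in> {A. A \<subseteq> V \<and> card A = 2}"
    then obtain x y where "x \<noteq> y" "A = {x, y}" "x \<in> V" "y \<in> V"
      by (auto simp: card_2_iff)
    then show "A \<in> (\<lambda>T. {z. T z \<noteq> z}) ` transpositions V"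
      unfolding transpositions_def
      by (intro image_eqI[where x="Transposition.transpose x y"]) (auto simp: support)
  next
    fix A assume "A \<in> (\<lambda>T. {z. T z \<noteq> z}) ` transpositions V"
    then obtain x y where "x \<noteq> y" "x \<in> V" "y \<in> V" "A = {z. Transposition.transpose x y z \<noteq> z}"
      unfolding transpositions_def by blast
    then show "A \<in> {A. A \<subseteq> V \<and> card A = 2}"
      by (simp add: support)
  qed
  ultimately show ?thesis
    using n_subsets[OF assms, of 2] card_image by fastforce
qed

lemma real_choose_two: "real (n choose 2) = real n * (real n - 1) / 2"
  by (cases n) (simp_all add: choose_two real_of_nat_div algebra_simps)

theorem lemma2p1:
  fixes \<pi> :: "nat \<Rightarrow> nat" and n s :: nat
  assumes "\<pi> permutes {1..n}" and "n \<ge> 2"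
  shows "measure_pmf.prob (pmf_of_set (transpositions {1..n})) {T. small_split \<pi> s T}
           \<le> 2 * real s / (real n - 1)"
proof -
  let ?Tr = "transpositions {1..n}" and ?E = "{T. small_split \<pi> s T}"
  let ?F = "(\<lambda>(z, k). Transposition.transpose z ((\<pi> ^^ k) z)) ` ({1..n} \<times> {1..s})"
  have "card (?Tr \<inter> ?E) \<le> card ?F"
    using small_splits_subset_image[OF assms(1)] by (intro card_mono) auto
  also have "\<dots> \<le> n * s"
    using card_image_le[of "{1..n} \<times> {1..s}"] by simp
  finally have card_E: "card (?Tr \<inter> ?E) \<le> n * s" .
  have card_Tr: "real (card ?Tr) = real n * (real n - 1) / 2"
    by (simp add: card_transpositions real_choose_two)
  have "0 < real (card ?Tr)"
    unfolding card_Tr using assms(2) by (intro divide_pos_pos mult_pos_pos) auto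
  then have "measure_pmf.prob (pmf_of_set ?Tr) ?E = card (?Tr \<inter> ?E) / card ?Tr"
    by (intro measure_pmf_of_set) (auto dest: card_ge_0_finite)
  also have "\<dots> \<le> real (n * s) / (real n * (real n - 1) / 2)"
    unfolding card_Tr using assms(2) by (intro divide_right_mono of_nat_mono[OF card_E]) auto
  also have "\<dots> = 2 * real s / (real n - 1)"
    using assms(2) by (simp add: field_simps)
  finally show ?thesis .
qed

end
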